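(* Given two trees $T$ and $T'$, there exists a tree $T''$ whose subdivision is a refinement of the subdivisions of both $T$ and $T'$ (every endpoint of a leaf interval of $T$ or of $T'$ is an endpoint of a leaf interval of $T''$).
   Context: Let $\tau=(\sqrt5-1)/2$, so $\tau^2+\tau=1$. A tree is a finite rooted binary tree whose carets (non-leaf vertex with its two children) are each labelled $x$-type or $y$-type. Vertices correspond to subintervals of $[0,1]$: the root to $[0,1]$; if a vertex corresponds to $[p,p+\tau^k]$, an $x$-type caret there gives children $[p,p+\tau^{k+2}]$ (left) and $[p+\tau^{k+2},p+\tau^k]$ (right), and a $y$-type caret gives $[p,p+\tau^{k+1}]$ (left) and $[p+\tau^{k+1},p+\tau^k]$ (right). The subdivision of a tree is the decomposition of $[0,1]$ into the intervals of its leaves. *)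

theory Defs
  imports Complex_Main
begin

definition tau :: real where "tau = (sqrt 5 - 1) / 2"

datatype tree = Leaf | XCaret tree tree | YCaret tree tree

text \<open>Leaf intervals of a tree whose root corresponds to the interval [p, p + tau^k],
  each leaf interval [q, q + tau^j] represented by the pair (q, j).\<close>
fun leaf_intervals :: "real \<Rightarrow> nat \<Rightarrow> tree \<Rightarrow> (real \<times> nat) set" where
  "leaf_intervals p k Leaf = {(p, k)}"
| "leaf_intervals p k (XCaret l r) =
     leaf_intervals p (k + 2) l \<union> leaf_intervals (p + tau ^ (k + 2)) (k + 1) r"
| "leaf_intervals p k (YCaret l r) =
     leaf_intervals p (k + 1) l \<union> leaf_intervals (p + tau ^ (k + 1)) (k + 2) r"

definition subdivision :: "tree \<Rightarrow> real set set" where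
  "subdivision T = (\<lambda>(q, j). {q .. q + tau ^ j}) ` leaf_intervals 0 0 T"

definition endpoints :: "tree \<Rightarrow> real set" where
  "endpoints T = (\<Union>(q, j) \<in> leaf_intervals 0 0 T. {q, q + tau ^ j})"

end

theory Submission
  imports Defs
begin

text \<open>Both caret types split an interval of length \<open>tau^k\<close> into pieces of lengths
  \<open>tau^(k+1)\<close> and \<open>tau^(k+2)\<close>, only in opposite orders. Hence the two trees
  \<open>XCaret a (XCaret b c)\<close> and \<open>YCaret (YCaret a b) c\<close> have the same subdivision, and
  by induction every tree can be refined to one with a prescribed caret type at the root.
  Two trees are then merged by refining the second to the root type of the first and
  merging the subtrees recursively.\<close>

definition endpoints_at :: "real \<Rightarrow> nat \<Rightarrow> tree \<Rightarrow> real set" where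
  "endpoints_at p k T = (\<Union>(q, j) \<in> leaf_intervals p k T. {q, q + tau ^ j})"

lemma endpoints_eq_endpoints_at: "endpoints T = endpoints_at 0 0 T"
  by (simp add: endpoints_def endpoints_at_def)

lemma endpoints_at_Leaf [simp]: "endpoints_at p k Leaf = {p, p + tau ^ k}"
  by (simp add: endpoints_at_def)

lemma endpoints_at_XCaret [simp]:
  "endpoints_at p k (XCaret l r) =
     endpoints_at p (k + 2) l \<union> endpoints_at (p + tau ^ (k + 2)) (k + 1) r"
  by (simp add: endpoints_at_def)

lemma endpoints_at_YCaret [simp]:
  "endpoints_at p k (YCaret l r) =
     endpoints_at p (k + 1) l \<union> endpoints_at (p + tau ^ (k + 1)) (k + 2) r"
  by (simp add: endpoints_at_def)

lemma tau_golden: "tau ^ 2 + tau = 1"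
proof -
  have "sqrt 5 ^ 2 = 5" by simp
  then show ?thesis unfolding tau_def by (simp add: field_simps power2_eq_square)
qed

lemma tau_power_recurrence: "tau ^ (k + 2) + tau ^ (k + 1) = tau ^ k"
proof -
  have "tau ^ (k + 2) + tau ^ (k + 1) = tau ^ k * (tau ^ 2 + tau)"
    by (simp add: algebra_simps power_add power2_eq_square)
  then show ?thesis by (simp add: tau_golden)
qed

lemma leaf_intervals_rotate:
  "leaf_intervals p k (XCaret a (XCaret b c)) = leaf_intervals p k (YCaret (YCaret a b) c)"
proof -
  have "p + tau ^ (k + 2) + tau ^ (k + 1 + 2) = p + tau ^ (k + 1)"
    using tau_power_recurrence[of "k + 1"] by (simp add: add.commute)
  moreover have "k + 1 + 1 = k + 2" by simp
  ultimately show ?thesis by (simp only: leaf_intervals.simps Un_assoc)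
qed

lemma endpoints_at_rotate:
  "endpoints_at p k (XCaret a (XCaret b c)) = endpoints_at p k (YCaret (YCaret a b) c)"
  unfolding endpoints_at_def leaf_intervals_rotate ..

lemma endpoints_at_bounds: "p \<in> endpoints_at p k T \<and> p + tau ^ k \<in> endpoints_at p k T"
proof (induction T arbitrary: p k)
  case Leaf
  show ?case by simp
next
  case (XCaret l r)
  have "p + tau ^ (k + 2) + tau ^ (k + 1) = p + tau ^ k"
    using tau_power_recurrence[of k] by simp
  then show ?case
    using XCaret.IH(1)[of p "k + 2"] XCaret.IH(2)[of "p + tau ^ (k + 2)" "k + 1"]
    by (metis UnI1 UnI2 endpoints_at_XCaret)
next
  case (YCaret l r)
  have "p + tau ^ (k + 1) + tau ^ (k + 2) = p + tau ^ k"
    using tau_power_recurrence[of k] by simp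
  then show ?case
    using YCaret.IH(1)[of p "k + 1"] YCaret.IH(2)[of "p + tau ^ (k + 1)" "k + 2"]
    by (metis UnI1 UnI2 endpoints_at_YCaret)
qed

lemma refine_to_caret:
  "(\<exists>a b. endpoints_at p k T \<subseteq> endpoints_at p k (XCaret a b)) \<and>
   (\<exists>a b. endpoints_at p k T \<subseteq> endpoints_at p k (YCaret a b))"
proof (induction T arbitrary: p k)
  case Leaf
  have "endpoints_at p k Leaf \<subseteq> endpoints_at p k (XCaret Leaf Leaf)"
    and "endpoints_at p k Leaf \<subseteq> endpoints_at p k (YCaret Leaf Leaf)"
    using endpoints_at_bounds[of p k "XCaret Leaf Leaf"] endpoints_at_bounds[of p k "YCaret Leaf Leaf"]
    by auto
  then show ?case by blast
next
  case (XCaret a c)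
  obtain b c' where "endpoints_at (p + tau ^ (k + 2)) (k + 1) c
      \<subseteq> endpoints_at (p + tau ^ (k + 2)) (k + 1) (XCaret b c')"
    using XCaret.IH(2) by blast
  then have "endpoints_at p k (XCaret a c) \<subseteq> endpoints_at p k (XCaret a (XCaret b c'))"
    by auto
  then have "endpoints_at p k (XCaret a c) \<subseteq> endpoints_at p k (YCaret (YCaret a b) c')"
    by (simp only: endpoints_at_rotate)
  then show ?case by blast
next
  case (YCaret a c)
  obtain a' b where "endpoints_at p (k + 1) a \<subseteq> endpoints_at p (k + 1) (YCaret a' b)"
    using YCaret.IH(1) by blast
  then have "endpoints_at p k (YCaret a c) \<subseteq> endpoints_at p k (YCaret (YCaret a' b) c)"
    by auto
  then have "endpoints_at p k (YCaret a c) \<subseteq> endpoints_at p k (XCaret a' (XCaret b c))"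
    by (simp only: endpoints_at_rotate)
  then show ?case by blast
qed

lemma common_refinement_at: "\<exists>C. endpoints_at p k A \<union> endpoints_at p k B \<subseteq> endpoints_at p k C"
proof (induction A arbitrary: B p k)
  case Leaf
  show ?case using endpoints_at_bounds[of p k B] by auto
next
  case (XCaret a1 a2)
  obtain b1 b2 where "endpoints_at p k B \<subseteq> endpoints_at p k (XCaret b1 b2)"
    using refine_to_caret by blast
  moreover obtain c1 where "endpoints_at p (k + 2) a1 \<union> endpoints_at p (k + 2) b1
      \<subseteq> endpoints_at p (k + 2) c1"
    using XCaret.IH(1) by blast
  moreover obtain c2 where "endpoints_at (p + tau ^ (k + 2)) (k + 1) a2 \<union> endpoints_at (p + tau ^ (k + 2)) (k + 1) b2
      \<subseteq> endpoints_at (p + tau ^ (k + 2)) (k + 1) c2"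
    using XCaret.IH(2) by blast
  ultimately have "endpoints_at p k (XCaret a1 a2) \<union> endpoints_at p k B
      \<subseteq> endpoints_at p k (XCaret c1 c2)"
    by auto
  then show ?case by blast
next
  case (YCaret a1 a2)
  obtain b1 b2 where "endpoints_at p k B \<subseteq> endpoints_at p k (YCaret b1 b2)"
    using refine_to_caret by blast
  moreover obtain c1 where "endpoints_at p (k + 1) a1 \<union> endpoints_at p (k + 1) b1
      \<subseteq> endpoints_at p (k + 1) c1"
    using YCaret.IH(1) by blast
  moreover obtain c2 where "endpoints_at (p + tau ^ (k + 1)) (k + 2) a2 \<union> endpoints_at (p + tau ^ (k + 1)) (k + 2) b2
      \<subseteq> endpoints_at (p + tau ^ (k + 1)) (k + 2) c2"
    using YCaret.IH(2) by blast
  ultimately have "endpoints_at p k (YCaret a1 a2) \<union> endpoints_at p k B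
      \<subseteq> endpoints_at p k (YCaret c1 c2)"
    by auto
  then show ?case by blast
qed

theorem mainTheorem11:
  fixes T T' :: tree
  shows "\<exists>T''. endpoints T \<subseteq> endpoints T'' \<and> endpoints T' \<subseteq> endpoints T''"
proof -
  obtain C where "endpoints_at 0 0 T \<union> endpoints_at 0 0 T' \<subseteq> endpoints_at 0 0 C"
    using common_refinement_at by blast
  then show ?thesis unfolding endpoints_eq_endpoints_at by blast
qed

end
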